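(* Consider the randomized instance described in the context. For any $\delta\in(0,1)$, $\Delta\in(0,m)$ and $\gamma\in(0,0.5]$ satisfying $2\sqrt{\log(2/\delta)\cdot m}\le\frac m2$ and $\frac{4(\Delta+1)}{m}\le\frac12$, under the choice $\epsilon=\frac{2(\Delta+1)}{m-2\sqrt{\log(2/\delta)\cdot m}}$, it holds with probability at least $1-\delta$ (over $X_1,\dots,X_m$) that $\mathrm{OptEnvy}\le-\Delta$.
   Context: Two agents $a,b$, $m$ items ($m$ a multiple of 4), additive utilities. An allocation is a partition $(\mathcal{A}_a,\mathcal{A}_b)$ of $[m]$; $\mathrm{Envy}_{a\to b}=\sum_{i\in\mathcal{A}_b}\mu^a_i-\sum_{i\in\mathcal{A}_a}\mu^a_i$, $\mathrm{Envy}_{b\to a}=\sum_{i\in\mathcal{A}_a}\mu^b_i-\sum_{i\in\mathcal{A}_b}\mu^b_i$, $\mathrm{Envy}=\max$ of the two, $\mathrm{OptEnvy}=\min$ of $\mathrm{Envy}$ over all allocations. Randomized instance: $X_1,\dots,X_m$ i.i.d. $\mathrm{Bernoulli}(1/2)$; for $i\le m/2$: if $X_i=1$ then $\mu^a_i=\frac12+\epsilon,\mu^b_i=\frac12-\epsilon$, if $X_i=0$ then $\mu^a_i=\frac12-\epsilon,\mu^b_i=\frac12+\epsilon$; for $i>m/2$: if $X_i=1$ then $\mu^a_i=\mu^b_i=\frac12+\gamma$, if $X_i=0$ then $\mu^a_i=\mu^b_i=\frac12-\gamma$. $\log$ is natural. *)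

theory Defs
  imports "HOL-Probability.Probability"
begin

text \<open>Items are 1..m. An outcome is X :: nat \<Rightarrow> bool restricted to {1..m}
 (X i = True means X_i = 1). Utilities of the randomized instance:\<close>

definition mu_a :: "nat \<Rightarrow> real \<Rightarrow> real \<Rightarrow> (nat \<Rightarrow> bool) \<Rightarrow> nat \<Rightarrow> real" where
  "mu_a m eps gam X i =
     (if 2 * i \<le> m then (if X i then 1/2 + eps else 1/2 - eps)
      else (if X i then 1/2 + gam else 1/2 - gam))"

definition mu_b :: "nat \<Rightarrow> real \<Rightarrow> real \<Rightarrow> (nat \<Rightarrow> bool) \<Rightarrow> nat \<Rightarrow> real" where
  "mu_b m eps gam X i =
     (if 2 * i \<le> m then (if X i then 1/2 - eps else 1/2 + eps)
      else (if X i then 1/2 + gam else 1/2 - gam))"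

definition envy_ab :: "nat \<Rightarrow> (nat \<Rightarrow> real) \<Rightarrow> nat set \<Rightarrow> real" where
  "envy_ab m ua A = (\<Sum>i\<in>{1..m} - A. ua i) - (\<Sum>i\<in>A. ua i)"

definition envy_ba :: "nat \<Rightarrow> (nat \<Rightarrow> real) \<Rightarrow> nat set \<Rightarrow> real" where
  "envy_ba m ub A = (\<Sum>i\<in>A. ub i) - (\<Sum>i\<in>{1..m} - A. ub i)"

definition envy :: "nat \<Rightarrow> (nat \<Rightarrow> real) \<Rightarrow> (nat \<Rightarrow> real) \<Rightarrow> nat set \<Rightarrow> real" where
  "envy m ua ub A = max (envy_ab m ua A) (envy_ba m ub A)"

definition opt_envy :: "nat \<Rightarrow> (nat \<Rightarrow> real) \<Rightarrow> (nat \<Rightarrow> real) \<Rightarrow> real" where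
  "opt_envy m ua ub = Min ((\<lambda>A. envy m ua ub A) ` Pow {1..m})"

text \<open>Distribution of (X_1,...,X_m): i.i.d. Bernoulli(1/2), i.e. uniform on {1..m} \<rightarrow> bool
 (extensional outside {1..m}).\<close>

definition X_dist :: "nat \<Rightarrow> (nat \<Rightarrow> bool) pmf" where
  "X_dist m = pmf_of_set (PiE {1..m} (\<lambda>_. UNIV))"

end

theory Submission
  imports Defs
begin

(* Let n = m/2 and let k and j count the items with X_i = 1 in the first and in the second
   half. Give agent a the first-half items it prefers together with a prefix of the second
   half, of value R to both agents; if W is the value of the whole second half, the two envies
   are x - n\<epsilon> and -x - n\<epsilon> with x = n/2 - k + W - 2R. The prefix values grow in steps
   in [0,1], so some prefix gives |x| \<le> 1 as soon as |k - n/2| + |j - n/2| \<le> n/2, and then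
   OptEnvy \<le> 1 - n\<epsilon> \<le> -\<Delta>; the choice of \<epsilon> is only used through n\<epsilon> \<ge> \<Delta> + 1.
   The balance condition fails only if k + j or k + (n - j) deviates from n by n/2. Both are
   Binomial(m, 1/2), the second because flipping the second half preserves the distribution,
   so by Hoeffding this has probability at most 4 exp(-m/8) \<le> \<delta>. *)

lemma card_filter_add_card_filter_not:
  assumes "finite S"
  shows "card {i\<in>S. P i} + card {i\<in>S. \<not> P i} = card S"
proof -
  have "card {i\<in>S. P i} + card {i\<in>S. \<not> P i} = card ({i\<in>S. P i} \<union> {i\<in>S. \<not> P i})"
    using assms by (intro card_Un_disjoint[symmetric]) auto
  also have "{i\<in>S. P i} \<union> {i\<in>S. \<not> P i} = S"
    by auto
  finally show ?thesis .
qed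

lemma card_filter_ivl_split:
  fixes n m :: nat
  assumes "n \<le> m"
  shows "card {i\<in>{1..m}. P i} = card {i\<in>{1..n}. P i} + card {i\<in>{n+1..m}. P i}"
proof -
  have "{i\<in>{1..m}. P i} = {i\<in>{1..n}. P i} \<union> {i\<in>{n+1..m}. P i}"
    using assms by auto
  moreover have "card ({i\<in>{1..n}. P i} \<union> {i\<in>{n+1..m}. P i}) = card {i\<in>{1..n}. P i} + card {i\<in>{n+1..m}. P i}"
    by (rule card_Un_disjoint) auto
  ultimately show ?thesis by simp
qed

lemma sum_if_eq_card:
  fixes a b :: "'a::semiring_1"
  assumes "finite S"
  shows "(\<Sum>i\<in>S. if P i then a else b) = of_nat (card {i\<in>S. P i}) * a + of_nat (card {i\<in>S. \<not> P i}) * b"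
proof -
  have "S \<inter> {i. P i} = {i\<in>S. P i}" and "S \<inter> - {i. P i} = {i\<in>S. \<not> P i}" by auto
  with assms show ?thesis by (simp add: sum.If_cases)
qed

lemma prefix_sum_within_half:
  fixes v :: "nat \<Rightarrow> real"
  assumes "\<And>i. a < i \<Longrightarrow> 0 \<le> v i" and "\<And>i. a < i \<Longrightarrow> v i \<le> 1"
    and "0 \<le> t" and "t \<le> (\<Sum>i\<in>{a+1..a+N}. v i)"
  shows "\<exists>r\<le>N. \<bar>(\<Sum>i\<in>{a+1..a+r}. v i) - t\<bar> \<le> 1/2"
  using assms(4)
proof (induction N)
  case 0
  then show ?case using assms(3) by auto
next
  case (Suc N)
  show ?case
  proof (cases "t \<le> (\<Sum>i\<in>{a+1..a+N}. v i)")
    case True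
    with Suc.IH show ?thesis by (meson le_SucI)
  next
    case False
    have "(\<Sum>i\<in>{a+1..a + Suc N}. v i) = (\<Sum>i\<in>{a+1..a+N}. v i) + v (a + Suc N)"
      by simp
    with False Suc.prems assms(1,2)[of "a + Suc N"]
    have "\<bar>(\<Sum>i\<in>{a+1..a+N}. v i) - t\<bar> \<le> 1/2 \<or> \<bar>(\<Sum>i\<in>{a+1..a + Suc N}. v i) - t\<bar> \<le> 1/2"
      by (auto simp: abs_if)
    then show ?thesis by (metis le_SucI order_refl)
  qed
qed

lemma opt_envy_le_envy:
  assumes "A \<subseteq> {1..m}"
  shows "opt_envy m ua ub \<le> envy m ua ub A"
  unfolding opt_envy_def using assms by (intro Min_le) auto

lemma envy_ab_eq:
  assumes "A \<subseteq> {1..m}"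
  shows "envy_ab m u A = (\<Sum>i\<in>{1..m}. u i) - 2 * (\<Sum>i\<in>A. u i)"
  using sum.subset_diff[OF assms, of u] by (simp add: envy_ab_def)

lemma envy_ba_eq:
  assumes "A \<subseteq> {1..m}"
  shows "envy_ba m u A = 2 * (\<Sum>i\<in>A. u i) - (\<Sum>i\<in>{1..m}. u i)"
  using sum.subset_diff[OF assms, of u] by (simp add: envy_ba_def)

lemma envy_preferred_items_plus_prefix:
  fixes m n r :: nat
  assumes m: "m = 2 * n" and r: "r \<le> n"
  shows "envy m (mu_a m \<epsilon> \<gamma> X) (mu_b m \<epsilon> \<gamma> X) ({i\<in>{1..n}. X i} \<union> {n+1..n+r})
    = \<bar>real n / 2 - real (card {i\<in>{1..n}. X i}) + (\<Sum>i\<in>{n+1..m}. mu_a m \<epsilon> \<gamma> X i)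
        - 2 * (\<Sum>i\<in>{n+1..n+r}. mu_a m \<epsilon> \<gamma> X i)\<bar> - real n * \<epsilon>"
proof -
  define ua ub where "ua = mu_a m \<epsilon> \<gamma> X" and "ub = mu_b m \<epsilon> \<gamma> X"
  define F A where "F = {i\<in>{1..n}. X i}" and "A = F \<union> {n+1..n+r}"
  define k k' where "k = real (card F)" and "k' = real (card {i\<in>{1..n}. \<not> X i})"
  define W R where "W = (\<Sum>i\<in>{n+1..m}. ua i)" and "R = (\<Sum>i\<in>{n+1..n+r}. ua i)"
  have ua_first: "ua i = (if X i then 1/2 + \<epsilon> else 1/2 - \<epsilon>)"
    and ub_first: "ub i = (if X i then 1/2 - \<epsilon> else 1/2 + \<epsilon>)" if "i \<in> {1..n}" for i
    using that m by (auto simp: ua_def ub_def mu_a_def mu_b_def)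
  have ub_second: "ub i = ua i" if "i \<in> {n+1..m}" for i
    using that m by (auto simp: ua_def ub_def mu_a_def mu_b_def)
  have k': "k' = real n - k"
    using card_filter_add_card_filter_not[of "{1..n}" X] by (simp add: k_def k'_def F_def flip: of_nat_add)
  have A: "A \<subseteq> {1..m}" and "F \<inter> {n+1..n+r} = {}"
    using m r by (auto simp: A_def F_def)
  then have sum_A: "(\<Sum>i\<in>A. u i) = (\<Sum>i\<in>F. u i) + (\<Sum>i\<in>{n+1..n+r}. u i)" for u :: "nat \<Rightarrow> real"
    by (simp add: A_def F_def sum.union_disjoint)
  have sum_total: "(\<Sum>i\<in>{1..m}. u i) = (\<Sum>i\<in>{1..n}. u i) + (\<Sum>i\<in>{n+1..m}. u i)" for u :: "nat \<Rightarrow> real"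
    using sum.ub_add_nat[of 1 n u n] m by (simp add: mult_2)
  have sum_A_a: "(\<Sum>i\<in>A. ua i) = k * (1/2 + \<epsilon>) + R"
    by (simp add: sum_A F_def k_def R_def ua_first)
  have sum_A_b: "(\<Sum>i\<in>A. ub i) = k * (1/2 - \<epsilon>) + R"
  proof -
    have "(\<Sum>i\<in>{n+1..n+r}. ub i) = R"
      unfolding R_def using m r by (intro sum.cong) (auto intro: ub_second)
    then show ?thesis by (simp add: sum_A F_def k_def ub_first)
  qed
  have sum_total_a: "(\<Sum>i\<in>{1..m}. ua i) = k * (1/2 + \<epsilon>) + k' * (1/2 - \<epsilon>) + W"
    unfolding sum_total W_def by (simp add: ua_first sum_if_eq_card k_def k'_def F_def)
  have sum_total_b: "(\<Sum>i\<in>{1..m}. ub i) = k * (1/2 - \<epsilon>) + k' * (1/2 + \<epsilon>) + W"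
  proof -
    have "(\<Sum>i\<in>{n+1..m}. ub i) = W"
      unfolding W_def by (intro sum.cong) (auto intro: ub_second)
    then show ?thesis unfolding sum_total by (simp add: ub_first sum_if_eq_card k_def k'_def F_def)
  qed
  have "envy_ab m ua A = (real n / 2 - k + W - 2 * R) - real n * \<epsilon>"
    and "envy_ba m ub A = - (real n / 2 - k + W - 2 * R) - real n * \<epsilon>"
    unfolding envy_ab_eq[OF A] envy_ba_eq[OF A] sum_A_a sum_A_b sum_total_a sum_total_b
    unfolding k' by (simp_all add: field_simps)
  then show ?thesis
    by (simp add: envy_def A_def ua_def ub_def W_def R_def F_def k_def abs_if)
qed

definition balanced_halves :: "nat \<Rightarrow> (nat \<Rightarrow> bool) \<Rightarrow> bool" where
  "balanced_halves n X \<longleftrightarrow> \<bar>real (card {i\<in>{1..n}. X i}) - real n / 2\<bar>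
    + \<bar>real (card {i\<in>{n+1..2*n}. X i}) - real n / 2\<bar> \<le> real n / 2"

lemma sum_mu_a_second_half_dev:
  fixes m n :: nat
  assumes m: "m = 2 * n" and \<gamma>: "\<bar>\<gamma>\<bar> \<le> 1/2"
  shows "\<bar>(\<Sum>i\<in>{n+1..m}. mu_a m \<epsilon> \<gamma> X i) - real n / 2\<bar>
    \<le> \<bar>real (card {i\<in>{n+1..m}. X i}) - real n / 2\<bar>"
proof -
  define j where "j = card {i\<in>{n+1..m}. X i}"
  have "(\<Sum>i\<in>{n+1..m}. mu_a m \<epsilon> \<gamma> X i) = (\<Sum>i\<in>{n+1..m}. if X i then 1/2 + \<gamma> else 1/2 - \<gamma>)"
    using m by (intro sum.cong) (auto simp: mu_a_def)
  moreover have "j + card {i\<in>{n+1..m}. \<not> X i} = n"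
    using card_filter_add_card_filter_not[of "{n+1..m}" X] m by (simp add: j_def)
  then have "card {i\<in>{n+1..m}. \<not> X i} = n - j" and "j \<le> n"
    by linarith+
  ultimately have "(\<Sum>i\<in>{n+1..m}. mu_a m \<epsilon> \<gamma> X i) - real n / 2 = 2 * \<gamma> * (real j - real n / 2)"
    by (simp add: sum_if_eq_card of_nat_diff j_def field_simps)
  then have "\<bar>(\<Sum>i\<in>{n+1..m}. mu_a m \<epsilon> \<gamma> X i) - real n / 2\<bar> = (2 * \<bar>\<gamma>\<bar>) * \<bar>real j - real n / 2\<bar>"
    by (simp add: abs_mult)
  also have "\<dots> \<le> 1 * \<bar>real j - real n / 2\<bar>"
    using \<gamma> by (intro mult_right_mono) auto
  finally show ?thesis
    by (simp add: j_def)
qed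

lemma opt_envy_le_if_balanced:
  fixes m n :: nat
  assumes m: "m = 2 * n" and \<gamma>: "\<bar>\<gamma>\<bar> \<le> 1/2" and \<epsilon>: "\<Delta> + 1 \<le> real n * \<epsilon>"
    and balanced: "balanced_halves n X"
  shows "opt_envy m (mu_a m \<epsilon> \<gamma> X) (mu_b m \<epsilon> \<gamma> X) \<le> - \<Delta>"
proof -
  define k j where "k = real (card {i\<in>{1..n}. X i})" and "j = real (card {i\<in>{n+1..m}. X i})"
  define W R where "W = (\<Sum>i\<in>{n+1..m}. mu_a m \<epsilon> \<gamma> X i)"
    and "R r = (\<Sum>i\<in>{n+1..n+r}. mu_a m \<epsilon> \<gamma> X i)" for r
  define t where "t = (real n / 2 - k + W) / 2"
  have two_t: "2 * t = real n / 2 - k + W"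
    by (simp add: t_def)
  have "R n = W"
    by (simp add: R_def W_def m mult_2)
  have "0 \<le> t" and "t \<le> R n"
    using two_t \<open>R n = W\<close> balanced[unfolded balanced_halves_def, folded m, folded k_def j_def]
      abs_le_D2[OF sum_mu_a_second_half_dev[OF m \<gamma>, of \<epsilon> X, folded W_def j_def]]
      abs_ge_self[of "k - real n / 2"] abs_ge_minus_self[of "k - real n / 2"]
    by linarith+
  moreover have "0 \<le> mu_a m \<epsilon> \<gamma> X i" and "mu_a m \<epsilon> \<gamma> X i \<le> 1" if "n < i" for i
    using m \<gamma> that by (auto simp: mu_a_def)
  ultimately obtain r where r: "r \<le> n" and near: "\<bar>R r - t\<bar> \<le> 1/2"
    unfolding R_def using prefix_sum_within_half[where v = "mu_a m \<epsilon> \<gamma> X"] by blast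
  have "{i\<in>{1..n}. X i} \<union> {n+1..n+r} \<subseteq> {1..m}"
    using m r by auto
  then have "opt_envy m (mu_a m \<epsilon> \<gamma> X) (mu_b m \<epsilon> \<gamma> X)
      \<le> envy m (mu_a m \<epsilon> \<gamma> X) (mu_b m \<epsilon> \<gamma> X) ({i\<in>{1..n}. X i} \<union> {n+1..n+r})"
    by (rule opt_envy_le_envy)
  also have "\<dots> = \<bar>real n / 2 - k + W - 2 * R r\<bar> - real n * \<epsilon>"
    unfolding k_def W_def R_def by (rule envy_preferred_items_plus_prefix[OF m r])
  also have "\<dots> \<le> 1 - real n * \<epsilon>"
    using two_t abs_le_D1[OF near] abs_le_D2[OF near] by (intro diff_right_mono abs_leI) linarith+
  also have "\<dots> \<le> - \<Delta>"
    using \<epsilon> by linarith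
  finally show ?thesis .
qed

lemma X_dist_eq_Pi_pmf: "X_dist m = Pi_pmf {1..m} undefined (\<lambda>_. bernoulli_pmf (1/2))"
proof -
  have "PiE_dflt {1..m} undefined (\<lambda>_. UNIV) = PiE {1..m} (\<lambda>_. (UNIV :: bool set))"
    by (auto simp: PiE_dflt_def PiE_def extensional_def)
  then show ?thesis
    by (simp add: X_dist_def bernoulli_pmf_half_conv_pmf_of_set Pi_pmf_of_set)
qed

lemma prob_count_deviation_ge:
  fixes d :: real
  assumes "0 < m" and "0 \<le> d"
  shows "measure_pmf.prob (X_dist m) {X. d \<le> \<bar>real (card {i\<in>{1..m}. X i}) - real m / 2\<bar>}
    \<le> 2 * exp (- 2 * d\<^sup>2 / real m)"
proof -
  interpret binomial_distribution m "1/2"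
    by unfold_locales auto
  have "binomial_pmf m (1/2) = map_pmf (\<lambda>X. card {i\<in>{1..m}. X i}) (X_dist m)"
    unfolding X_dist_eq_Pi_pmf by (rule binomial_pmf_altdef') auto
  moreover have "measure_pmf.prob (binomial_pmf m (1/2)) {x. \<bar>real x - real m * (1/2)\<bar> \<ge> d}
      \<le> 2 * exp (- 2 * d\<^sup>2 / real m)"
    using assms by (intro prob_abs_ge)
  ultimately show ?thesis
    by (simp add: vimage_def)
qed

definition flip_on :: "nat set \<Rightarrow> (nat \<Rightarrow> bool) \<Rightarrow> nat \<Rightarrow> bool" where
  "flip_on T X i = (if i \<in> T then \<not> X i else X i)"

lemma map_pmf_flip_on_X_dist:
  assumes "T \<subseteq> {1..m}"
  shows "map_pmf (flip_on T) (X_dist m) = X_dist m"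
proof -
  have "flip_on T (flip_on T X) = X" for X
    by (simp add: flip_on_def fun_eq_iff)
  moreover have "flip_on T X i = X i" if "i \<notin> {1..m}" for X i
    using assms that by (auto simp: flip_on_def)
  ultimately have "bij_betw (flip_on T) (PiE {1..m} (\<lambda>_. UNIV)) (PiE {1..m} (\<lambda>_. UNIV))"
    by (intro bij_betwI[of _ _ _ "flip_on T"]) (auto simp: PiE_def extensional_def)
  then show ?thesis
    unfolding X_dist_def by (subst map_pmf_of_set_bij_betw) (auto simp: PiE_eq_empty_iff finite_PiE)
qed

lemma not_balanced_halves_imp_deviation:
  fixes m n :: nat
  assumes m: "m = 2 * n" and "\<not> balanced_halves n X"
  shows "real m / 4 \<le> \<bar>real (card {i\<in>{1..m}. X i}) - real m / 2\<bar>
    \<or> real m / 4 \<le> \<bar>real (card {i\<in>{1..m}. flip_on {n+1..m} X i}) - real m / 2\<bar>"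
proof -
  define a b where "a = real (card {i\<in>{1..n}. X i}) - real n / 2"
    and "b = real (card {i\<in>{n+1..m}. X i}) - real n / 2"
  have "{i\<in>{1..n}. flip_on {n+1..m} X i} = {i\<in>{1..n}. X i}"
    and "{i\<in>{n+1..m}. flip_on {n+1..m} X i} = {i\<in>{n+1..m}. \<not> X i}"
    by (auto simp: flip_on_def)
  then have "card {i\<in>{1..m}. flip_on {n+1..m} X i} = card {i\<in>{1..n}. X i} + card {i\<in>{n+1..m}. \<not> X i}"
    using card_filter_ivl_split[of n m "flip_on {n+1..m} X"] m by simp
  moreover have "card {i\<in>{n+1..m}. X i} + card {i\<in>{n+1..m}. \<not> X i} = n"
    using card_filter_add_card_filter_not[of "{n+1..m}" X] m by simp
  ultimately have "real (card {i\<in>{1..m}. flip_on {n+1..m} X i})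
      = real (card {i\<in>{1..n}. X i}) + real n - real (card {i\<in>{n+1..m}. X i})"
    by (simp flip: of_nat_add)
  then have "real (card {i\<in>{1..m}. flip_on {n+1..m} X i}) - real m / 2 = a - b"
    using m by (simp add: a_def b_def)
  moreover have "real (card {i\<in>{1..m}. X i}) - real m / 2 = a + b"
    using card_filter_ivl_split[of n m X] m by (simp add: a_def b_def field_simps)
  moreover have "real n / 2 < \<bar>a\<bar> + \<bar>b\<bar>"
    using assms by (simp add: balanced_halves_def a_def b_def)
  then have "real n / 2 \<le> \<bar>a + b\<bar> \<or> real n / 2 \<le> \<bar>a - b\<bar>"
    by (cases "0 \<le> a"; cases "0 \<le> b") auto
  ultimately show ?thesis
    using m by simp
qed

lemma prob_balanced_halves_ge:
  fixes m n :: nat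
  assumes m: "m = 2 * n" and "0 < n"
  shows "1 - 4 * exp (- real m / 8) \<le> measure_pmf.prob (X_dist m) {X. balanced_halves n X}"
proof -
  define far where "far = {X. real m / 4 \<le> \<bar>real (card {i\<in>{1..m}. X i}) - real m / 2\<bar>}"
  let ?P = "measure_pmf.prob (X_dist m)"
  have "?P (UNIV - {X. balanced_halves n X}) \<le> ?P (far \<union> flip_on {n+1..m} -` far)"
    using not_balanced_halves_imp_deviation[OF m]
    by (intro measure_pmf.finite_measure_mono) (auto simp: far_def)
  also have "\<dots> \<le> ?P far + ?P (flip_on {n+1..m} -` far)"
    by (rule measure_Un_le) simp_all
  also have "?P (flip_on {n+1..m} -` far) = ?P far"
    using m by (subst measure_map_pmf[symmetric]) (simp add: map_pmf_flip_on_X_dist)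
  also have "?P far \<le> 2 * exp (- real m / 8)"
    using prob_count_deviation_ge[of m "real m / 4"] assms
    by (simp add: far_def power2_eq_square)
  finally show ?thesis
    using measure_pmf.prob_compl[of "{X. balanced_halves n X}" "X_dist m"] by simp
qed

lemma four_exp_neg_eighth_le:
  fixes m \<delta> :: real
  assumes "0 < \<delta>" and "\<delta> < 1" and "0 < m" and "2 * sqrt (ln (2/\<delta>) * m) \<le> m / 2"
  shows "4 * exp (- m / 8) \<le> \<delta>"
proof -
  define L where "L = ln (2/\<delta>)"
  have "2 < 2/\<delta>"
    using assms(1,2) by (simp add: field_simps)
  then have "0 < L" and exp_L: "exp L = 2/\<delta>"
    using assms(1,2) by (simp_all add: L_def)
  have "(2 * sqrt (L * m))\<^sup>2 \<le> (m / 2)\<^sup>2"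
    using assms(3,4) \<open>0 < L\<close> by (intro power_mono) (simp_all add: L_def)
  then have "4 * (L * m) \<le> m * (m / 4)"
    using \<open>0 < L\<close> assms(3) by (simp add: power2_eq_square power_mult_distrib)
  then have "L \<le> m / 16"
    using assms(3) by (simp add: field_simps)
  then have "2/\<delta> \<le> exp (m / 16)"
    by (simp flip: exp_L)
  then have "2/\<delta> * 2 \<le> exp (m / 16) * exp (m / 16)"
    using \<open>2 < 2/\<delta>\<close> by (intro mult_mono) simp_all
  also have "\<dots> = exp (m / 8)"
    by (simp flip: exp_add)
  finally show ?thesis
    using assms(1) by (simp add: exp_minus field_simps)
qed

theorem lemma22:
  fixes m :: nat and \<delta> \<Delta> \<gamma> \<epsilon> :: real
  assumes "4 dvd m"
    and "0 < \<delta>" "\<delta> < 1"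
    and "0 < \<Delta>" "\<Delta> < real m"
    and "0 < \<gamma>" "\<gamma> \<le> 1/2"
    and "2 * sqrt (ln (2/\<delta>) * real m) \<le> real m / 2"
    and "4 * (\<Delta> + 1) / real m \<le> 1/2"
    and "\<epsilon> = 2 * (\<Delta> + 1) / (real m - 2 * sqrt (ln (2/\<delta>) * real m))"
  shows "measure_pmf.prob (X_dist m)
           {X. opt_envy m (mu_a m \<epsilon> \<gamma> X) (mu_b m \<epsilon> \<gamma> X) \<le> - \<Delta>} \<ge> 1 - \<delta>"
proof -
  have "2 dvd m"
    using dvd_trans[of 2 4 m] assms(1) by simp
  then obtain n where m: "m = 2 * n" ..
  have "0 < real m"
    using assms(4,5) by linarith
  define s where "s = sqrt (ln (2/\<delta>) * real m)"
  have "0 \<le> s" and "2 * s < real m"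
    using assms(2,3,8) \<open>0 < real m\<close> by (simp_all add: s_def)
  have "\<Delta> + 1 \<le> real n * \<epsilon>"
  proof -
    have "real n * \<epsilon> = (\<Delta> + 1) * (real m / (real m - 2 * s))"
      using assms(10) m by (simp add: s_def)
    also have "\<dots> \<ge> (\<Delta> + 1) * 1"
      using \<open>0 \<le> s\<close> \<open>2 * s < real m\<close> assms(4) by (intro mult_left_mono) simp_all
    finally show ?thesis by simp
  qed
  have "1 - \<delta> \<le> 1 - 4 * exp (- real m / 8)"
    using four_exp_neg_eighth_le[of \<delta> "real m"] assms(2,3,8) \<open>0 < real m\<close> by simp
  also have "\<dots> \<le> measure_pmf.prob (X_dist m) {X. balanced_halves n X}"
    using \<open>0 < real m\<close> m by (intro prob_balanced_halves_ge) simp_all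
  also have "\<dots> \<le> measure_pmf.prob (X_dist m)
    {X. opt_envy m (mu_a m \<epsilon> \<gamma> X) (mu_b m \<epsilon> \<gamma> X) \<le> - \<Delta>}"
    using opt_envy_le_if_balanced[OF m _ \<open>\<Delta> + 1 \<le> real n * \<epsilon>\<close>] assms(6,7)
    by (intro measure_pmf.finite_measure_mono) auto
  finally show ?thesis .
qed

end
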